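(* Let $n\in\mathbb N$, $\alpha>0$, and let $Q\subset\mathbb R^n$ be a cube with sides parallel to the axes and side length $r=\ell(Q)\le1$; let $2Q$ be the concentric cube of side $2r$. Then there is a constant $C$ depending only on $n$ and $\alpha$ such that for every measurable $g:\mathbb R^n\to[0,\infty)$ and every $x\in Q$, $$\int_{2Q}\frac{g(y)}{|x-y|^{n-\alpha}}\,dy\le C\int_Q\frac{Mg(y)}{|x-y|^{n-\alpha}}\,dy.$$
   Context: $Mg(y)=\sup_{\rho>0}\frac{1}{|B(y,\rho)|}\int_{B(y,\rho)}|g|$ is the Hardy–Littlewood maximal function. *)

theory Defs
  imports "HOL-Analysis.Analysis"
begin

definition cube :: "'a::euclidean_space \<Rightarrow> real \<Rightarrow> 'a set" where
  "cube c r = cbox (c - (r/2) *\<^sub>R One) (c + (r/2) *\<^sub>R One)"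

definition maximal_fn :: "('a::euclidean_space \<Rightarrow> real) \<Rightarrow> 'a \<Rightarrow> ennreal" where
  "maximal_fn g y = (SUP \<rho>\<in>{0<..}.
      (\<integral>\<^sup>+ z\<in>ball y \<rho>. ennreal \<bar>g z\<bar> \<partial>lebesgue) / emeasure lebesgue (ball y \<rho>))"

end

theory Submission
  imports Defs
begin

(* Fix x in Q and consider the kernel
     K(z, y) = 1_Q(z) 1[|z - y| < 8 |x - z|] |x - z|^(alpha - n) / |B(z, 8 |x - z|)|.
   Integrating g(y) K(z, y) in y averages g over a ball around z, so it is at most
   Mg(z) |x - z|^(alpha - n). Integrating K(z, y) in z is at least c |x - y|^(alpha - n) for y in 2Q:
   Q contains a subcube of side comparable to |x - y| all of whose points z satisfy
   |x - y| / 6 <= |x - z| <= |x - y| / 3, and then y lies in B(z, 8 |x - z|).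
   Tonelli's theorem combines the two bounds. *)

lemma sigma_finite_measure_completion:
  assumes "sigma_finite_measure M"
  shows "sigma_finite_measure (completion M)"
proof -
  obtain A where A: "countable A" "A \<subseteq> sets M" "\<Union>A = space M" "\<forall>a\<in>A. emeasure M a \<noteq> \<infinity>"
    using sigma_finite_measure.sigma_finite_countable[OF assms] by blast
  show ?thesis
    by (rule sigma_finite_measure.intro, rule exI[of _ A]) (use A in auto)
qed

lemma measurable_pair_measure_completion:
  assumes "f \<in> M \<Otimes>\<^sub>M N \<rightarrow>\<^sub>M L"
  shows "f \<in> completion M \<Otimes>\<^sub>M completion N \<rightarrow>\<^sub>M L"
proof -
  have "(\<lambda>x. x) \<in> completion M \<rightarrow>\<^sub>M M" "(\<lambda>x. x) \<in> completion N \<rightarrow>\<^sub>M N"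
    by (rule measurable_completion, simp)+
  then have "(\<lambda>p. p) \<in> completion M \<Otimes>\<^sub>M completion N \<rightarrow>\<^sub>M M \<Otimes>\<^sub>M N"
    unfolding measurable_pair_iff
    using measurable_compose[OF measurable_fst] measurable_compose[OF measurable_snd] by simp
  from measurable_compose[OF this assms] show ?thesis .
qed

lemma nn_integral_le_via_kernel:
  fixes K :: "'m \<Rightarrow> 'n \<Rightarrow> ennreal"
  assumes "sigma_finite_measure M" "sigma_finite_measure N"
    and [measurable]: "case_prod K \<in> borel_measurable (M \<Otimes>\<^sub>M N)" and [measurable]: "f \<in> borel_measurable N"
    and column: "\<And>y. a y \<le> C * (\<integral>\<^sup>+ z. K z y \<partial>M)"
    and row: "\<And>z. (\<integral>\<^sup>+ y. K z y * f y \<partial>N) \<le> b z"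
  shows "(\<integral>\<^sup>+ y. a y * f y \<partial>N) \<le> C * (\<integral>\<^sup>+ z. b z \<partial>M)"
proof -
  interpret pair_sigma_finite M N
    using assms(1,2) by (intro pair_sigma_finite.intro)
  have "(\<integral>\<^sup>+ y. a y * f y \<partial>N) \<le> (\<integral>\<^sup>+ y. C * ((\<integral>\<^sup>+ z. K z y \<partial>M) * f y) \<partial>N)"
    using column by (intro nn_integral_mono) (simp add: mult.assoc[symmetric] mult_right_mono)
  also have "\<dots> = C * (\<integral>\<^sup>+ y. (\<integral>\<^sup>+ z. K z y \<partial>M) * f y \<partial>N)"
    by (intro nn_integral_cmult) measurable
  also have "(\<integral>\<^sup>+ y. (\<integral>\<^sup>+ z. K z y \<partial>M) * f y \<partial>N) = (\<integral>\<^sup>+ y. (\<integral>\<^sup>+ z. K z y * f y \<partial>M) \<partial>N)"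
    by (intro nn_integral_cong nn_integral_multc[symmetric]) measurable
  also have "\<dots> = (\<integral>\<^sup>+ z. (\<integral>\<^sup>+ y. K z y * f y \<partial>N) \<partial>M)"
    by (intro Fubini') measurable
  also have "\<dots> \<le> (\<integral>\<^sup>+ z. b z \<partial>M)"
    using row by (intro nn_integral_mono)
  finally show ?thesis
    by (simp add: mult_left_mono)
qed

lemma dist_le_sqrt_DIM_mult:
  fixes x y :: "'a::euclidean_space"
  assumes "\<And>i. i \<in> Basis \<Longrightarrow> \<bar>x \<bullet> i - y \<bullet> i\<bar> \<le> a"
  shows "dist x y \<le> sqrt DIM('a) * a"
proof -
  obtain i :: 'a where "i \<in> Basis"
    using nonempty_Basis by blast
  then have "0 \<le> a"
    using assms[of i] by linarith
  have "dist x y \<le> L2_set (\<lambda>i. a) (Basis :: 'a set)"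
    unfolding euclidean_dist_l2[of x y] dist_real_def by (rule L2_set_mono) (simp_all add: assms)
  then show ?thesis
    using \<open>0 \<le> a\<close> by (simp add: L2_set_constant)
qed

lemma sqrt_DIM_mult_le_dist:
  fixes x y :: "'a::euclidean_space"
  assumes "0 \<le> b" and "\<And>i. i \<in> Basis \<Longrightarrow> b \<le> \<bar>x \<bullet> i - y \<bullet> i\<bar>"
  shows "sqrt DIM('a) * b \<le> dist x y"
proof -
  have "L2_set (\<lambda>i. b) (Basis :: 'a set) \<le> dist x y"
    unfolding euclidean_dist_l2[of x y] dist_real_def by (rule L2_set_mono) (simp_all add: assms)
  then show ?thesis
    using \<open>0 \<le> b\<close> by (simp add: L2_set_constant)
qed

lemma mem_cube_iff: "x \<in> cube c r \<longleftrightarrow> (\<forall>i\<in>Basis. \<bar>x \<bullet> i - c \<bullet> i\<bar> \<le> r / 2)"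
proof -
  have "c \<bullet> i - r / 2 \<le> x \<bullet> i \<and> x \<bullet> i \<le> c \<bullet> i + r / 2 \<longleftrightarrow> \<bar>x \<bullet> i - c \<bullet> i\<bar> \<le> r / 2" for i
    by linarith
  then show ?thesis
    unfolding cube_def mem_box inner_diff_left inner_add_left by simp
qed

lemma cube_in_sets_borel [measurable]: "cube c r \<in> sets borel"
  by (simp add: cube_def)

lemma subcube_at_distance:
  fixes x y c :: "'a::euclidean_space"
  assumes x: "x \<in> cube c r" and y: "y \<in> cube c (2 * r)"
  defines "s \<equiv> dist x y / (6 * sqrt DIM('a))"
  obtains l where "cbox l (l + s *\<^sub>R One) \<subseteq> cube c r"
    and "\<And>z. z \<in> cbox l (l + s *\<^sub>R One) \<Longrightarrow> dist x y / 6 \<le> dist x z \<and> dist x z \<le> dist x y / 3"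
proof
  have s0: "0 \<le> s"
    by (simp add: s_def)
  have "dist x y \<le> sqrt DIM('a) * (3 / 2 * r)"
  proof (rule dist_le_sqrt_DIM_mult)
    fix i :: 'a assume "i \<in> Basis"
    then have "\<bar>x \<bullet> i - c \<bullet> i\<bar> \<le> r / 2" "\<bar>y \<bullet> i - c \<bullet> i\<bar> \<le> r"
      using x y by (auto simp: mem_cube_iff)
    then show "\<bar>x \<bullet> i - y \<bullet> i\<bar> \<le> 3 / 2 * r"
      by linarith
  qed
  then have s_le: "2 * s \<le> r / 2"
    by (simp add: s_def field_simps)
  \<comment> \<open>The subcube lies on the side of x facing the centre c, hence inside the cube.\<close>
  define l where "l = (\<Sum>i\<in>Basis. (if x \<bullet> i \<le> c \<bullet> i then x \<bullet> i + s else x \<bullet> i - 2 * s) *\<^sub>R i)"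
  have l: "l \<bullet> i = (if x \<bullet> i \<le> c \<bullet> i then x \<bullet> i + s else x \<bullet> i - 2 * s)" if "i \<in> Basis" for i
    using that by (simp add: l_def)
  have coords: "s \<le> \<bar>x \<bullet> i - z \<bullet> i\<bar> \<and> \<bar>x \<bullet> i - z \<bullet> i\<bar> \<le> 2 * s \<and> \<bar>z \<bullet> i - c \<bullet> i\<bar> \<le> r / 2"
    if z: "z \<in> cbox l (l + s *\<^sub>R One)" and i: "i \<in> Basis" for z i
  proof -
    have "l \<bullet> i \<le> z \<bullet> i" "z \<bullet> i \<le> l \<bullet> i + s"
      using z i by (auto simp: mem_box inner_add_left)
    moreover have "\<bar>x \<bullet> i - c \<bullet> i\<bar> \<le> r / 2"
      using x i by (simp add: mem_cube_iff)
    ultimately show ?thesis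
      using l[OF i] s0 s_le by (cases "x \<bullet> i \<le> c \<bullet> i") (auto simp: abs_if split: if_split_asm)
  qed
  show "cbox l (l + s *\<^sub>R One) \<subseteq> cube c r"
    using coords by (auto simp: mem_cube_iff)
  fix z assume z: "z \<in> cbox l (l + s *\<^sub>R One)"
  have "sqrt DIM('a) * s \<le> dist x z" "dist x z \<le> sqrt DIM('a) * (2 * s)"
    using coords[OF z] s0 by (blast intro: sqrt_DIM_mult_le_dist dist_le_sqrt_DIM_mult)+
  then show "dist x y / 6 \<le> dist x z \<and> dist x z \<le> dist x y / 3"
    by (simp_all add: s_def field_simps)
qed

lemma min_powr_mult_le_powr:
  fixes a b t d e :: real
  assumes "0 < a" "0 < t" "a * t \<le> d" "d \<le> b * t"
  shows "min (a powr e) (b powr e) * t powr e \<le> d powr e"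
proof (cases "0 \<le> e")
  case True
  have "min (a powr e) (b powr e) * t powr e \<le> (a * t) powr e"
    using assms by (simp add: powr_mult mult_right_mono)
  also have "\<dots> \<le> d powr e"
    using True assms by (intro powr_mono2) auto
  finally show ?thesis .
next
  case False
  have "0 < d"
    using assms mult_pos_pos[OF assms(1,2)] by linarith
  have "min (a powr e) (b powr e) * t powr e \<le> (b * t) powr e"
    using assms by (simp add: powr_mult mult_right_mono)
  also have "\<dots> \<le> d powr e"
    using False assms \<open>0 < d\<close> by (intro powr_mono2') auto
  finally show ?thesis .
qed

lemma nn_integral_ball_le_maximal_fn:
  fixes g :: "'a::euclidean_space \<Rightarrow> real"
  assumes "0 < \<rho>"
  shows "(\<integral>\<^sup>+ y\<in>ball z \<rho>. ennreal \<bar>g y\<bar> \<partial>lebesgue)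
    \<le> ennreal (unit_ball_vol DIM('a) * \<rho> ^ DIM('a)) * maximal_fn g z"
proof -
  define V where "V = unit_ball_vol DIM('a) * \<rho> ^ DIM('a)"
  define I where "I = (\<integral>\<^sup>+ y\<in>ball z \<rho>. ennreal \<bar>g y\<bar> \<partial>lebesgue)"
  have "0 < V"
    using assms by (simp add: V_def)
  have "emeasure lebesgue (ball z \<rho>) = ennreal V"
    using emeasure_ball[where c = z and r = \<rho>] assms by (simp add: V_def)
  then have "I / ennreal V \<le> maximal_fn g z"
    unfolding maximal_fn_def I_def using assms by (intro SUP_upper2[where i = \<rho>]) auto
  moreover have "I = ennreal V * (I / ennreal V)"
    using \<open>0 < V\<close> by (simp add: ennreal_times_divide mult.commute[of "ennreal V"] ennreal_mult_divide_eq)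
  ultimately show ?thesis
    unfolding I_def[symmetric] V_def[symmetric] by (metis mult_left_mono zero_le)
qed

definition transfer_kernel :: "real \<Rightarrow> 'a::euclidean_space set \<Rightarrow> 'a \<Rightarrow> 'a \<Rightarrow> 'a \<Rightarrow> real" where
  "transfer_kernel \<alpha> Q x z y =
     (if z \<in> Q \<and> dist z y < 8 * dist x z
      then dist x z powr (\<alpha> - DIM('a)) / (unit_ball_vol DIM('a) * (8 * dist x z) ^ DIM('a))
      else 0)"

lemma borel_measurable_transfer_kernel:
  assumes [measurable]: "Q \<in> sets borel"
  shows "(\<lambda>(z, y). ennreal (transfer_kernel \<alpha> Q x z y)) \<in> borel_measurable (lborel \<Otimes>\<^sub>M lborel)"
  unfolding transfer_kernel_def by measurable

lemma nn_integral_transfer_kernel_le_maximal_fn: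
  fixes g :: "'a::euclidean_space \<Rightarrow> real"
  assumes [measurable]: "g \<in> borel_measurable lebesgue" and g_nonneg: "\<And>y. 0 \<le> g y"
  shows "(\<integral>\<^sup>+ y. ennreal (transfer_kernel \<alpha> Q x z y) * ennreal (g y) \<partial>lebesgue)
    \<le> maximal_fn g z * ennreal (1 / dist x z powr (real DIM('a) - \<alpha>)) * indicator Q z"
proof (cases "z \<in> Q \<and> z \<noteq> x")
  case False
  then show ?thesis
    by (auto simp: transfer_kernel_def)
next
  case True
  define \<rho> where "\<rho> = 8 * dist x z"
  define w where "w = dist x z powr (\<alpha> - DIM('a)) / (unit_ball_vol DIM('a) * \<rho> ^ DIM('a))"
  have "0 < \<rho>"
    using True by (auto simp: \<rho>_def)
  have ball_measurable: "(\<lambda>y. indicator (ball z \<rho>) y * ennreal \<bar>g y\<bar>) \<in> borel_measurable lebesgue"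
    by (intro borel_measurable_times_ennreal borel_measurable_indicator) (auto intro: measurable_completion)
  have "(\<integral>\<^sup>+ y. ennreal (transfer_kernel \<alpha> Q x z y) * ennreal (g y) \<partial>lebesgue)
      = (\<integral>\<^sup>+ y. ennreal w * (indicator (ball z \<rho>) y * ennreal \<bar>g y\<bar>) \<partial>lebesgue)"
    using True g_nonneg
    by (intro nn_integral_cong) (auto simp: transfer_kernel_def w_def \<rho>_def dist_commute indicator_def)
  also have "\<dots> = ennreal w * (\<integral>\<^sup>+ y\<in>ball z \<rho>. ennreal \<bar>g y\<bar> \<partial>lebesgue)"
    using ball_measurable by (subst nn_integral_cmult) (auto simp: mult.commute)
  also have "\<dots> \<le> ennreal w * (ennreal (unit_ball_vol DIM('a) * \<rho> ^ DIM('a)) * maximal_fn g z)"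
    using nn_integral_ball_le_maximal_fn[OF \<open>0 < \<rho>\<close>] by (intro mult_left_mono) auto
  also have "\<dots> = maximal_fn g z * ennreal (1 / dist x z powr (real DIM('a) - \<alpha>))"
  proof -
    have "ennreal w * ennreal (unit_ball_vol DIM('a) * \<rho> ^ DIM('a))
        = ennreal (1 / dist x z powr (real DIM('a) - \<alpha>))"
      using \<open>0 < \<rho>\<close> unit_ball_vol_pos[of "real DIM('a)", THEN less_imp_neq]
      by (simp add: w_def powr_minus_divide[symmetric] flip: ennreal_mult)
    then show ?thesis
      by (metis mult.assoc mult.commute)
  qed
  finally show ?thesis
    using True by simp
qed

lemma transfer_kernel_lower_bound:
  fixes x y z :: "'a::euclidean_space" and \<alpha> :: real
  assumes "z \<in> Q" "0 < dist x y" "dist x y / 6 \<le> dist x z" "dist x z \<le> dist x y / 3"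
  shows "min ((1/6) powr (\<alpha> - DIM('a))) ((1/3) powr (\<alpha> - DIM('a))) * dist x y powr (\<alpha> - DIM('a))
           / (unit_ball_vol DIM('a) * (8/3 * dist x y) ^ DIM('a))
         \<le> transfer_kernel \<alpha> Q x z y"
proof -
  define t where "t = dist x y"
  define d where "d = dist x z"
  have "0 < d"
    using assms unfolding d_def by linarith
  have "dist z y \<le> d + t"
    using dist_triangle[of z y x] by (simp add: d_def t_def dist_commute)
  then have near: "dist z y < 8 * d"
    using assms \<open>0 < d\<close> unfolding d_def t_def by linarith
  have "min ((1/6) powr (\<alpha> - DIM('a))) ((1/3) powr (\<alpha> - DIM('a))) * t powr (\<alpha> - DIM('a))
      \<le> d powr (\<alpha> - DIM('a))"
    using assms by (intro min_powr_mult_le_powr) (simp_all add: t_def d_def)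
  moreover have "unit_ball_vol DIM('a) * (8 * d) ^ DIM('a) \<le> unit_ball_vol DIM('a) * (8/3 * t) ^ DIM('a)"
    using assms \<open>0 < d\<close> by (intro mult_left_mono power_mono) (simp_all add: t_def d_def)
  ultimately show ?thesis
    using assms(1) near \<open>0 < d\<close> unfolding transfer_kernel_def t_def[symmetric] d_def[symmetric]
    by (simp add: frac_le)
qed

lemma transfer_kernel_mass:
  fixes \<alpha> :: real
  shows "\<exists>C. \<forall>(c::'a::euclidean_space) r x y. x \<in> cube c r \<longrightarrow> y \<in> cube c (2 * r) \<longrightarrow>
           ennreal (1 / dist x y powr (real DIM('a) - \<alpha>))
             \<le> ennreal C * (\<integral>\<^sup>+ z. ennreal (transfer_kernel \<alpha> (cube c r) x z y) \<partial>lebesgue)"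
proof -
  define n where "n = DIM('a)"
  define m where "m = min ((1/6) powr (\<alpha> - n)) ((1/3) powr (\<alpha> - n))"
  define C where "C = unit_ball_vol n * (8/3) ^ n * (6 * sqrt n) ^ n / m"
  have "0 < m" "0 < unit_ball_vol n" "0 < sqrt n"
    by (simp_all add: m_def n_def)
  show ?thesis
  proof (intro exI[of _ C] allI impI)
    fix c r and x y :: 'a
    assume x: "x \<in> cube c r" and y: "y \<in> cube c (2 * r)"
    define t where "t = dist x y"
    define s where "s = t / (6 * sqrt n)"
    define \<beta> where "\<beta> = m * t powr (\<alpha> - n) / (unit_ball_vol n * (8/3 * t) ^ n)"
    show "ennreal (1 / dist x y powr (real DIM('a) - \<alpha>))
        \<le> ennreal C * (\<integral>\<^sup>+ z. ennreal (transfer_kernel \<alpha> (cube c r) x z y) \<partial>lebesgue)"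
    proof (cases "t = 0")
      case True
      then show ?thesis
        by (simp add: t_def)
    next
      case False
      then have "0 < t"
        by (simp add: t_def)
      obtain l where sub: "cbox l (l + s *\<^sub>R One) \<subseteq> cube c r"
        and annulus: "\<And>z. z \<in> cbox l (l + s *\<^sub>R One) \<Longrightarrow> t / 6 \<le> dist x z \<and> dist x z \<le> t / 3"
        using subcube_at_distance[OF x y] unfolding s_def t_def n_def by blast
      have "ennreal \<beta> * indicator (cbox l (l + s *\<^sub>R One)) z
          \<le> ennreal (transfer_kernel \<alpha> (cube c r) x z y)" for z
        using sub annulus[of z] transfer_kernel_lower_bound[of z "cube c r" x y \<alpha>] \<open>0 < t\<close>
        by (auto simp: indicator_def \<beta>_def m_def n_def t_def intro: ennreal_leI)
      then have "ennreal \<beta> * emeasure lebesgue (cbox l (l + s *\<^sub>R One))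
          \<le> (\<integral>\<^sup>+ z. ennreal (transfer_kernel \<alpha> (cube c r) x z y) \<partial>lebesgue)"
        by (subst nn_integral_cmult_indicator[symmetric]) (auto intro: nn_integral_mono)
      moreover have "emeasure lebesgue (cbox l (l + s *\<^sub>R One)) = ennreal (s ^ n)"
        using \<open>0 < t\<close> \<open>0 < sqrt n\<close>
        by (simp add: emeasure_lborel_cbox_eq inner_add_left s_def n_def)
      moreover have "1 / t powr (n - \<alpha>) = C * (\<beta> * s ^ n)"
        using \<open>0 < t\<close> \<open>0 < m\<close> \<open>0 < unit_ball_vol n\<close>[THEN less_imp_neq, symmetric] \<open>0 < sqrt n\<close>
        by (simp add: C_def \<beta>_def s_def powr_minus_divide[symmetric] power_mult_distrib power_divide
            field_simps)
      moreover have "0 \<le> C" "0 \<le> \<beta>" "0 \<le> s"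
        using \<open>0 < t\<close> \<open>0 < m\<close> \<open>0 < unit_ball_vol n\<close> by (simp_all add: C_def \<beta>_def s_def)
      ultimately show ?thesis
        unfolding t_def[symmetric] n_def[symmetric]
        by (simp flip: ennreal_mult) (metis ennreal_mult' mult_left_mono zero_le)
    qed
  qed
qed

theorem lemma5p1:
  fixes \<alpha> :: real
  assumes "\<alpha> > 0"
  shows "\<exists>C::real. \<forall>(c::'a::euclidean_space) r g x.
           0 < r \<longrightarrow> r \<le> 1 \<longrightarrow>
           g \<in> borel_measurable lebesgue \<longrightarrow> (\<forall>y. 0 \<le> g y) \<longrightarrow>
           x \<in> cube c r \<longrightarrow>
           (\<integral>\<^sup>+ y\<in>cube c (2*r). ennreal (g y / dist x y powr (real DIM('a) - \<alpha>)) \<partial>lebesgue)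
             \<le> ennreal C * (\<integral>\<^sup>+ y\<in>cube c r.
                   maximal_fn g y * ennreal (1 / dist x y powr (real DIM('a) - \<alpha>)) \<partial>lebesgue)"
proof -
  obtain C where mass: "\<And>(c::'a) r x y. x \<in> cube c r \<Longrightarrow> y \<in> cube c (2 * r) \<Longrightarrow>
      ennreal (1 / dist x y powr (real DIM('a) - \<alpha>))
        \<le> ennreal C * (\<integral>\<^sup>+ z. ennreal (transfer_kernel \<alpha> (cube c r) x z y) \<partial>lebesgue)"
    using transfer_kernel_mass by blast
  have lebesgue: "sigma_finite_measure (lebesgue :: 'a measure)"
    by (rule sigma_finite_measure_completion[OF sigma_finite_lborel])
  show ?thesis
  proof (intro exI[of _ C] allI impI)
    fix c r and g :: "'a \<Rightarrow> real" and x :: 'a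
    assume g: "g \<in> borel_measurable lebesgue" and g_nonneg: "\<forall>y. 0 \<le> g y" and x: "x \<in> cube c r"
    have "(\<integral>\<^sup>+ y\<in>cube c (2*r). ennreal (g y / dist x y powr (real DIM('a) - \<alpha>)) \<partial>lebesgue)
        = (\<integral>\<^sup>+ y. ennreal (1 / dist x y powr (real DIM('a) - \<alpha>)) * indicator (cube c (2*r)) y * ennreal (g y) \<partial>lebesgue)"
      using g_nonneg by (intro nn_integral_cong) (auto simp: indicator_def ennreal_mult'[symmetric])
    also have "\<dots> \<le> ennreal C * (\<integral>\<^sup>+ y\<in>cube c r.
        maximal_fn g y * ennreal (1 / dist x y powr (real DIM('a) - \<alpha>)) \<partial>lebesgue)"
    proof (rule nn_integral_le_via_kernel[OF lebesgue lebesgue _ _ _ nn_integral_transfer_kernel_le_maximal_fn])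
      show "(\<lambda>(z, y). ennreal (transfer_kernel \<alpha> (cube c r) x z y)) \<in> borel_measurable (lebesgue \<Otimes>\<^sub>M lebesgue)"
        by (intro measurable_pair_measure_completion borel_measurable_transfer_kernel cube_in_sets_borel)
    qed (use g g_nonneg x mass in \<open>auto simp: indicator_def\<close>)
    finally show "(\<integral>\<^sup>+ y\<in>cube c (2*r). ennreal (g y / dist x y powr (real DIM('a) - \<alpha>)) \<partial>lebesgue)
        \<le> ennreal C * (\<integral>\<^sup>+ y\<in>cube c r.
          maximal_fn g y * ennreal (1 / dist x y powr (real DIM('a) - \<alpha>)) \<partial>lebesgue)" .
  qed
qed

end
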